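(* Let $C_n>0$ and suppose the optimal dual variable satisfies $\lambda\le\kappa\, n^{1/3}/C_n^{1/3}$ for some constant $\kappa>0$. Then, with $x_t$ the predictions of FLH-OGD, $$\sum_{t=1}^n (y_t-x_t)^2-(y_t-u_t)^2\le c\,\log n\,\max\{n^{1/3}C_n^{2/3},1\},$$ where $c>0$ depends only on $B,G,\kappa$.
   Context: Squared loss game: $n\ge 3$, $B\ge 1$, $G\ge B$; for $t=1,\dots,n$ the learner predicts $x_t\in[-B,B]$, then the adversary reveals $y_t\in[-G,G]$. $[a,b]=\{a,\dots,b\}$. FLH-OGD: For each $j\in[n]$ a base learner $E^j$ is started at time $j$; it runs projected online gradient descent on $[-B,B]$ on the losses $x\mapsto (y_t-x)^2$, $t\ge j$: its first prediction $x^{(j)}_j$ is a fixed point of $[-B,B]$, and $x^{(j)}_{t+1}=\Pi\big(x^{(j)}_t-\tfrac{1}{2\tau}\cdot 2(x^{(j)}_t-y_t)\big)$ with $\tau=t-j+1$, $\Pi$ the projection onto $[-B,B]$. The FLH meta-algorithm with learning rate $\zeta$ keeps a probability vector $v_t=(v_t^{(1)},\dots,v_t^{(t)})$, $v_1=(1)$; it predicts $x_t=\sum_{j\le t}v_t^{(j)}x^{(j)}_t$; after $y_t$ is revealed it sets $\hat v^{(i)}_{t+1}=v_t^{(i)}e^{-\zeta(y_t-x_t^{(i)})^2}/\sum_{j\le t}v_t^{(j)}e^{-\zeta(y_t-x_t^{(j)})^2}$ for $i\le t$, then $v^{(t+1)}_{t+1}=1/(t+1)$ and $v^{(i)}_{t+1}=(1-\tfrac1{t+1})\hat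 v^{(i)}_{t+1}$. FLH-OGD uses $\zeta=1/(2(G+B)^2)$. Offline optimal: $u_1,\dots,u_n$ is an optimal solution of: minimize $\frac12\sum_{t=1}^n(y_t-\tilde u_t)^2$ subject to $\sum_{t=2}^{n}|\tilde u_t-\tilde u_{t-1}|\le C_n$ and $-B\le\tilde u_t\le B$; $\lambda\ge0$ is an optimal dual variable for the total variation constraint (with $\gamma^\pm_t\ge 0$ those of the box constraints), satisfying the KKT conditions: there are $s_t\in[-1,1]$ with $s_t=\mathrm{sign}(u_{t+1}-u_t)$ whenever $u_{t+1}\ne u_t$, $s_0=s_n=0$, $u_t-y_t=\lambda(s_t-s_{t-1})+\gamma_t^--\gamma_t^+$, $\lambda(\sum_{t=2}^n|u_t-u_{t-1}|-C_n)=0$, $\gamma_t^-(u_t+B)=0$, $\gamma_t^+(u_t-B)=0$. *)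

theory Defs
  imports Complex_Main
begin

definition proj :: "real \<Rightarrow> real \<Rightarrow> real" where
  "proj B x = max (- B) (min B x)"

text \<open>Base learner E^j (projected OGD started at time j with initial point x0):
  ogd B x0 y j k is its prediction at time j + k.  At time t = j + k we have
  tau = k + 1, and the step x - (1/(2 tau)) * 2 (x - y_t) = x - (x - y_t)/tau.\<close>
primrec ogd :: "real \<Rightarrow> real \<Rightarrow> (nat \<Rightarrow> real) \<Rightarrow> nat \<Rightarrow> nat \<Rightarrow> real" where
  "ogd B x0 y j 0 = x0"
| "ogd B x0 y j (Suc k) =
     proj B (ogd B x0 y j k - (ogd B x0 y j k - y (j + k)) / real (Suc k))"

text \<open>Prediction of base learner E^j at time t (meaningful for t >= j);
  init j is its (fixed) first prediction.\<close>
definition base_pred :: "real \<Rightarrow> (nat \<Rightarrow> real) \<Rightarrow> (nat \<Rightarrow> real) \<Rightarrow> nat \<Rightarrow> nat \<Rightarrow> real" where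
  "base_pred B init y j t = ogd B (init j) y j (t - j)"

text \<open>FLH weights: flh_w zeta y xb t i = v_t^(i) (for t >= 1, 1 <= i <= t),
  where xb j t is the prediction of base learner j at time t.\<close>
primrec flh_w :: "real \<Rightarrow> (nat \<Rightarrow> real) \<Rightarrow> (nat \<Rightarrow> nat \<Rightarrow> real) \<Rightarrow> nat \<Rightarrow> nat \<Rightarrow> real" where
  "flh_w \<zeta> y xb 0 = (\<lambda>i. 0)"
| "flh_w \<zeta> y xb (Suc t) =
     (if t = 0 then (\<lambda>i. if i = 1 then 1 else 0)
      else (\<lambda>i.
        let Z = (\<Sum>j = 1..t. flh_w \<zeta> y xb t j * exp (- \<zeta> * (y t - xb j t)\<^sup>2))
        in if i = Suc t then 1 / real (Suc t)
           else if 1 \<le> i \<and> i \<le> t then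
             (1 - 1 / real (Suc t)) * (flh_w \<zeta> y xb t i * exp (- \<zeta> * (y t - xb i t)\<^sup>2) / Z)
           else 0))"

definition flh_ogd :: "real \<Rightarrow> real \<Rightarrow> (nat \<Rightarrow> real) \<Rightarrow> (nat \<Rightarrow> real) \<Rightarrow> nat \<Rightarrow> real" where
  "flh_ogd B G init y t =
     (let \<zeta> = 1 / (2 * (G + B)\<^sup>2);
          xb = base_pred B init y
      in \<Sum>j = 1..t. flh_w \<zeta> y xb t j * xb j t)"

definition tv :: "nat \<Rightarrow> (nat \<Rightarrow> real) \<Rightarrow> real" where
  "tv n u = (\<Sum>t = 2..n. \<bar>u t - u (t - 1)\<bar>)"

definition sq_obj :: "nat \<Rightarrow> (nat \<Rightarrow> real) \<Rightarrow> (nat \<Rightarrow> real) \<Rightarrow> real" where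
  "sq_obj n y u = (1/2) * (\<Sum>t = 1..n. (y t - u t)\<^sup>2)"

definition feasible :: "nat \<Rightarrow> real \<Rightarrow> real \<Rightarrow> (nat \<Rightarrow> real) \<Rightarrow> bool" where
  "feasible n B C u \<longleftrightarrow> tv n u \<le> C \<and> (\<forall>t \<in> {1..n}. - B \<le> u t \<and> u t \<le> B)"

definition offline_opt :: "nat \<Rightarrow> real \<Rightarrow> real \<Rightarrow> (nat \<Rightarrow> real) \<Rightarrow> (nat \<Rightarrow> real) \<Rightarrow> bool" where
  "offline_opt n B C y u \<longleftrightarrow> feasible n B C u \<and>
     (\<forall>w. feasible n B C w \<longrightarrow> sq_obj n y u \<le> sq_obj n y w)"

text \<open>KKT conditions with dual variables lam (TV constraint), gm/gp (box constraints),
  and subgradient signs s_0..s_n.\<close>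
definition kkt :: "nat \<Rightarrow> real \<Rightarrow> real \<Rightarrow> (nat \<Rightarrow> real) \<Rightarrow> (nat \<Rightarrow> real) \<Rightarrow> real
    \<Rightarrow> (nat \<Rightarrow> real) \<Rightarrow> (nat \<Rightarrow> real) \<Rightarrow> (nat \<Rightarrow> real) \<Rightarrow> bool" where
  "kkt n B C y u lam s gm gp \<longleftrightarrow>
     lam \<ge> 0 \<and>
     (\<forall>t \<in> {0..n}. - 1 \<le> s t \<and> s t \<le> 1) \<and> s 0 = 0 \<and> s n = 0 \<and>
     (\<forall>t \<in> {1..<n}. u (t + 1) \<noteq> u t \<longrightarrow> s t = sgn (u (t + 1) - u t)) \<and>
     (\<forall>t \<in> {1..n}. u t - y t = lam * (s t - s (t - 1)) + gm t - gp t \<and>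
        gm t \<ge> 0 \<and> gp t \<ge> 0 \<and> gm t * (u t + B) = 0 \<and> gp t * (u t - B) = 0) \<and>
     lam * (tv n u - C) = 0"

end

theory Submission
  imports Defs "HOL-Analysis.Analysis"
begin

text \<open>Cut the time line greedily into maximal intervals on which (length) \<times> (variation of u)^2 \<le> 1.
  On such an interval the KKT conditions show that a suitable constant comparator loses at most
  1 + 6 \<lambda> \<times> (variation) against u; projected OGD started at the beginning of the interval has
  logarithmic regret against every constant; and FLH, whose loss is exp-concave for the chosen
  \<zeta>, competes with that base learner at cost O(ln n).  Each interval but the last one consumes a
  unit of the budget \<mu> \<times> TV + 2n/\<mu>^2, which for \<mu> = (n/C)^(1/3) is O(n^(1/3) C^(2/3)), and
  the assumed bound on \<lambda> turns \<lambda> \<times> TV \<le> \<lambda> C into the same order.\<close>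

section \<open>Projected online gradient descent\<close>

lemma harm_le_one_plus_ln: "0 < n \<Longrightarrow> harm n \<le> 1 + ln (real n)"
  using euler_mascheroni_sequence_decreasing[of 1 n] by (simp add: harm_def)

lemma proj_bounds: "0 \<le> B \<Longrightarrow> - B \<le> proj B x \<and> proj B x \<le> B"
  by (auto simp: proj_def)

lemma proj_nonexpansive: "- B \<le> w \<Longrightarrow> w \<le> B \<Longrightarrow> \<bar>proj B x - w\<bar> \<le> \<bar>x - w\<bar>"
  by (auto simp: proj_def)

lemma ogd_bounds:
  "0 \<le> B \<Longrightarrow> - B \<le> x0 \<Longrightarrow> x0 \<le> B \<Longrightarrow> - B \<le> ogd B x0 y j k \<and> ogd B x0 y j k \<le> B"
  by (cases k) (auto simp: proj_bounds)

text \<open>With step size 1/(2\<tau>) on the 2-strongly convex square loss the weighted squared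
  distances to the comparator telescope when summed over the rounds.\<close>
lemma ogd_step_regret:
  fixes z y w B G :: real
  assumes w: "- B \<le> w" "w \<le> B" and z: "\<bar>z\<bar> \<le> B" and y: "\<bar>y\<bar> \<le> G"
  shows "(y - z)\<^sup>2 - (y - w)\<^sup>2
    \<le> real m * (z - w)\<^sup>2 - real (Suc m) * (proj B (z - (z - y) / real (Suc m)) - w)\<^sup>2
      + (G + B)\<^sup>2 / real (Suc m)"
proof -
  define \<tau> where "\<tau> = real (Suc m)"
  have \<tau>: "\<tau> > 0" by (simp add: \<tau>_def)
  have "(proj B (z - (z - y) / \<tau>) - w)\<^sup>2 \<le> (z - (z - y) / \<tau> - w)\<^sup>2"
    using proj_nonexpansive[OF w] by (simp add: abs_le_square_iff)
  then have "\<tau> * (proj B (z - (z - y) / \<tau>) - w)\<^sup>2 \<le> \<tau> * (z - (z - y) / \<tau> - w)\<^sup>2"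
    using \<tau> by (simp add: mult_left_mono)
  also have "\<dots> = \<tau> * (z - w)\<^sup>2 - 2 * (z - y) * (z - w) + (z - y)\<^sup>2 / \<tau>"
    using \<tau> by (simp add: power2_eq_square field_simps)
  finally have "\<tau> * (proj B (z - (z - y) / \<tau>) - w)\<^sup>2
      \<le> \<tau> * (z - w)\<^sup>2 - 2 * (z - y) * (z - w) + (z - y)\<^sup>2 / \<tau>" .
  moreover have "(z - y)\<^sup>2 \<le> (G + B)\<^sup>2"
    using z y by (subst power2_le_iff_abs_le) auto
  then have "(z - y)\<^sup>2 / \<tau> \<le> (G + B)\<^sup>2 / \<tau>"
    using \<tau> by (simp add: divide_right_mono)
  moreover have "(y - z)\<^sup>2 - (y - w)\<^sup>2 = 2 * (z - y) * (z - w) - (z - w)\<^sup>2"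
    by (simp add: power2_eq_square algebra_simps)
  ultimately show ?thesis
    by (simp add: \<tau>_def algebra_simps)
qed

lemma ogd_regret:
  fixes B G w x0 :: real and y :: "nat \<Rightarrow> real"
  assumes "0 \<le> B" "- B \<le> w" "w \<le> B" "- B \<le> x0" "x0 \<le> B"
    and y: "\<forall>k<m. \<bar>y (j + k)\<bar> \<le> G"
  shows "(\<Sum>k<m. (y (j + k) - ogd B x0 y j k)\<^sup>2 - (y (j + k) - w)\<^sup>2)
      + real m * (ogd B x0 y j m - w)\<^sup>2 \<le> (G + B)\<^sup>2 * harm m"
  using y
proof (induction m)
  case 0
  then show ?case by (simp add: harm_def)
next
  case (Suc m)
  have "\<bar>ogd B x0 y j m\<bar> \<le> B"
    using ogd_bounds[OF assms(1,4,5), of y j m] by (simp add: abs_le_iff)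
  then have "(y (j + m) - ogd B x0 y j m)\<^sup>2 - (y (j + m) - w)\<^sup>2
      \<le> real m * (ogd B x0 y j m - w)\<^sup>2 - real (Suc m) * (ogd B x0 y j (Suc m) - w)\<^sup>2
        + (G + B)\<^sup>2 / real (Suc m)"
    using ogd_step_regret[OF assms(2,3)] Suc.prems by simp
  moreover have "(G + B)\<^sup>2 * harm (Suc m) = (G + B)\<^sup>2 * harm m + (G + B)\<^sup>2 / real (Suc m)"
    by (simp add: harm_Suc field_simps)
  ultimately show ?case
    using Suc by simp
qed

lemma base_pred_regret:
  fixes B G w :: real and y init :: "nat \<Rightarrow> real"
  assumes "0 \<le> B" "- B \<le> w" "w \<le> B" "- B \<le> init a" "init a \<le> B"
    and "a \<le> b" and y: "\<forall>t\<in>{a..b}. \<bar>y t\<bar> \<le> G"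
  shows "(\<Sum>t=a..b. (y t - base_pred B init y a t)\<^sup>2 - (y t - w)\<^sup>2)
      \<le> (G + B)\<^sup>2 * (1 + ln (real (Suc (b - a))))"
proof -
  let ?m = "Suc (b - a)"
  have "(\<Sum>t=a..b. (y t - base_pred B init y a t)\<^sup>2 - (y t - w)\<^sup>2)
      = (\<Sum>k<?m. (y (a + k) - ogd B (init a) y a k)\<^sup>2 - (y (a + k) - w)\<^sup>2)"
    using \<open>a \<le> b\<close>
    by (simp add: sum.atLeastAtMost_shift_0 atLeast0AtMost lessThan_Suc_atMost base_pred_def)
  also have "\<dots> \<le> (G + B)\<^sup>2 * harm ?m"
    using ogd_regret[OF assms(1-5), of ?m y a G] y \<open>a \<le> b\<close>
    by (auto intro: order_trans[rotated])
  also have "\<dots> \<le> (G + B)\<^sup>2 * (1 + ln (real ?m))"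
    by (intro mult_left_mono harm_le_one_plus_ln) auto
  finally show ?thesis .
qed

section \<open>Follow the leading history\<close>

lemma exp_concave_square_loss:
  fixes G B y \<zeta> :: real and p x :: "nat \<Rightarrow> real"
  assumes \<zeta>: "0 \<le> \<zeta>" "2 * \<zeta> * (G + B)\<^sup>2 \<le> 1" and y: "\<bar>y\<bar> \<le> G"
    and S: "finite S" and p: "sum p S = 1" "\<forall>i\<in>S. p i \<ge> 0"
    and x: "\<forall>i\<in>S. - B \<le> x i \<and> x i \<le> B"
  shows "(\<Sum>i\<in>S. p i * exp (- \<zeta> * (y - x i)\<^sup>2)) \<le> exp (- \<zeta> * (y - (\<Sum>i\<in>S. p i * x i))\<^sup>2)"
proof -
  define f where "f v = - exp (- \<zeta> * (y - v)\<^sup>2)" for v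
  define f' where "f' v = - exp (- \<zeta> * (y - v)\<^sup>2) * (2 * \<zeta> * (y - v))" for v
  define f'' where "f'' v = 2 * \<zeta> * exp (- \<zeta> * (y - v)\<^sup>2) * (1 - 2 * \<zeta> * (y - v)\<^sup>2)" for v
  have "DERIV f v :> f' v" for v
    unfolding f_def f'_def by (auto intro!: derivative_eq_intros simp: algebra_simps)
  moreover have "DERIV f' v :> f'' v" for v
    unfolding f'_def f''_def
    by (auto intro!: derivative_eq_intros simp: algebra_simps power2_eq_square)
  moreover have "f'' v \<ge> 0" if "v \<in> {-B..B}" for v
  proof -
    have "(y - v)\<^sup>2 \<le> (G + B)\<^sup>2"
      using that y by (subst power2_le_iff_abs_le) auto
    then have "2 * \<zeta> * (y - v)\<^sup>2 \<le> 2 * \<zeta> * (G + B)\<^sup>2"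
      using \<zeta>(1) by (intro mult_left_mono) auto
    then show ?thesis
      using \<zeta> unfolding f''_def by simp
  qed
  ultimately have "convex_on {-B..B} f"
    by (intro f''_ge0_imp_convex) auto
  then have "f (\<Sum>i\<in>S. p i *\<^sub>R x i) \<le> (\<Sum>i\<in>S. p i * f (x i))"
    using S p x by (intro convex_on_sum) auto
  then show ?thesis unfolding f_def by (simp add: sum_negf)
qed

text \<open>flh_norm t is the normaliser of the exponential-weights update after round t,
  flh_posterior t i is the paper's weight hat-v_(t+1) of expert i before the new expert is mixed
  in, and flh_pred t is the prediction x_t.\<close>

definition flh_norm :: "real \<Rightarrow> (nat \<Rightarrow> real) \<Rightarrow> (nat \<Rightarrow> nat \<Rightarrow> real) \<Rightarrow> nat \<Rightarrow> real" where
  "flh_norm \<zeta> y xb t = (\<Sum>j = 1..t. flh_w \<zeta> y xb t j * exp (- \<zeta> * (y t - xb j t)\<^sup>2))"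

definition flh_posterior :: "real \<Rightarrow> (nat \<Rightarrow> real) \<Rightarrow> (nat \<Rightarrow> nat \<Rightarrow> real) \<Rightarrow> nat \<Rightarrow> nat \<Rightarrow> real" where
  "flh_posterior \<zeta> y xb t i = flh_w \<zeta> y xb t i * exp (- \<zeta> * (y t - xb i t)\<^sup>2) / flh_norm \<zeta> y xb t"

definition flh_pred :: "real \<Rightarrow> (nat \<Rightarrow> real) \<Rightarrow> (nat \<Rightarrow> nat \<Rightarrow> real) \<Rightarrow> nat \<Rightarrow> real" where
  "flh_pred \<zeta> y xb t = (\<Sum>j = 1..t. flh_w \<zeta> y xb t j * xb j t)"

lemma flh_w_Suc:
  "1 \<le> i \<Longrightarrow> i \<le> t \<Longrightarrow> flh_w \<zeta> y xb (Suc t) i = real t / real (Suc t) * flh_posterior \<zeta> y xb t i"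
  by (auto simp: flh_posterior_def flh_norm_def Let_def field_simps)

lemma flh_w_diag: "1 \<le> t \<Longrightarrow> flh_w \<zeta> y xb t t = 1 / real t"
  by (cases t) (auto simp: Let_def)

text \<open>The recursive equation would unfold the whole normaliser; flh_w_Suc is the usable form.\<close>
declare flh_w.simps(2) [simp del]

lemma flh_w_distribution:
  assumes "1 \<le> t"
  shows "(\<forall>i\<in>{1..t}. flh_w \<zeta> y xb t i > 0) \<and> sum (flh_w \<zeta> y xb t) {1..t} = 1"
  using assms
proof (induction t rule: nat_induct_at_least)
  case base
  then show ?case by (simp add: flh_w_diag)
next
  case (Suc t)
  let ?P = "flh_posterior \<zeta> y xb t"
  have norm_pos: "flh_norm \<zeta> y xb t > 0"
    unfolding flh_norm_def using Suc by (intro sum_pos) auto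
  then have "\<forall>i\<in>{1..t}. ?P i > 0"
    using Suc.IH by (simp add: flh_posterior_def)
  then have "\<forall>i\<in>{1..Suc t}. flh_w \<zeta> y xb (Suc t) i > 0"
    using Suc.hyps by (auto simp: flh_w_Suc flh_w_diag le_Suc_eq)
  moreover have "sum ?P {1..t} = 1"
    using norm_pos by (simp add: flh_posterior_def flh_norm_def flip: sum_divide_distrib)
  then have "sum (flh_w \<zeta> y xb (Suc t)) {1..t} = real t / real (Suc t)"
    by (simp add: flh_w_Suc sum_distrib_left[symmetric] flip: times_divide_eq_left)
  then have "sum (flh_w \<zeta> y xb (Suc t)) {1..Suc t} = 1"
    by (simp add: flh_w_diag field_simps)
  ultimately show ?case by blast
qed

lemma flh_norm_pos: "1 \<le> t \<Longrightarrow> flh_norm \<zeta> y xb t > 0"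
  unfolding flh_norm_def using flh_w_distribution by (intro sum_pos) auto

lemma flh_posterior_pos: "1 \<le> i \<Longrightarrow> i \<le> t \<Longrightarrow> flh_posterior \<zeta> y xb t i > 0"
  unfolding flh_posterior_def using flh_w_distribution[of t \<zeta> y xb] flh_norm_pos[of t \<zeta> y xb] by auto

lemma flh_posterior_le_1:
  assumes "1 \<le> i" "i \<le> t"
  shows "flh_posterior \<zeta> y xb t i \<le> 1"
proof -
  have "flh_w \<zeta> y xb t i * exp (- \<zeta> * (y t - xb i t)\<^sup>2) \<le> flh_norm \<zeta> y xb t"
    unfolding flh_norm_def using assms flh_w_distribution[of t \<zeta> y xb]
    by (intro member_le_sum) (auto intro: less_imp_le)
  then show ?thesis
    using flh_norm_pos[of t \<zeta> y xb] assms by (simp add: flh_posterior_def)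
qed

locale flh_bounded =
  fixes G B \<zeta> :: real and y :: "nat \<Rightarrow> real" and xb :: "nat \<Rightarrow> nat \<Rightarrow> real" and N :: nat
  assumes \<zeta>: "0 \<le> \<zeta>" "2 * \<zeta> * (G + B)\<^sup>2 \<le> 1"
    and y_bounded: "\<forall>t\<in>{1..N}. \<bar>y t\<bar> \<le> G"
    and experts_bounded: "\<forall>t\<in>{1..N}. \<forall>j\<in>{1..t}. - B \<le> xb j t \<and> xb j t \<le> B"
begin

text \<open>By exp-concavity the normaliser is at most the exponentiated loss of the mixture, so the
  regret of one round is a log-ratio of weights.\<close>
lemma flh_step_regret:
  assumes "1 \<le> i" "i \<le> t" "t \<le> N"
  shows "\<zeta> * ((y t - flh_pred \<zeta> y xb t)\<^sup>2 - (y t - xb i t)\<^sup>2)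
      \<le> ln (flh_posterior \<zeta> y xb t i) - ln (flh_w \<zeta> y xb t i)"
proof -
  have "flh_norm \<zeta> y xb t \<le> exp (- \<zeta> * (y t - flh_pred \<zeta> y xb t)\<^sup>2)"
    unfolding flh_norm_def flh_pred_def using assms flh_w_distribution[of t \<zeta> y xb] y_bounded experts_bounded
    by (intro exp_concave_square_loss[OF \<zeta>]) (auto intro: less_imp_le)
  then have "ln (flh_norm \<zeta> y xb t) \<le> ln (exp (- \<zeta> * (y t - flh_pred \<zeta> y xb t)\<^sup>2))"
    using flh_norm_pos[of t \<zeta> y xb] assms by (intro ln_mono) auto
  moreover have "ln (flh_posterior \<zeta> y xb t i)
      = ln (flh_w \<zeta> y xb t i) - \<zeta> * (y t - xb i t)\<^sup>2 - ln (flh_norm \<zeta> y xb t)"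
  proof -
    have "flh_w \<zeta> y xb t i > 0"
      using assms flh_w_distribution[of t \<zeta> y xb] by auto
    then show ?thesis
      using assms flh_norm_pos[of t \<zeta> y xb] by (simp add: flh_posterior_def ln_div ln_mult)
  qed
  ultimately show ?thesis
    by (simp add: algebra_simps)
qed

lemma flh_regret_telescope:
  assumes "1 \<le> a" "a \<le> b" "b \<le> N"
  shows "\<zeta> * (\<Sum>t=a..b. (y t - flh_pred \<zeta> y xb t)\<^sup>2 - (y t - xb a t)\<^sup>2)
      \<le> ln (flh_posterior \<zeta> y xb b a) - ln (flh_w \<zeta> y xb a a) + ln (real b) - ln (real a)"
  using assms(2,3)
proof (induction b rule: nat_induct_at_least)
  case base
  then show ?case using flh_step_regret[OF assms(1)] by simp
next
  case (Suc b)
  have "ln (flh_w \<zeta> y xb (Suc b) a) = ln (real b) - ln (real (Suc b)) + ln (flh_posterior \<zeta> y xb b a)"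
    using flh_w_Suc[OF assms(1) Suc.hyps, of \<zeta> y xb] flh_posterior_pos[OF assms(1) Suc.hyps, of \<zeta> y xb]
      Suc.hyps assms(1)
    by (simp add: ln_mult ln_div)
  then show ?case
    using Suc flh_step_regret[of a "Suc b"] assms(1) by (simp add: algebra_simps)
qed

text \<open>The expert started at time a enters with weight 1/a and ends with posterior weight at
  most 1, so the telescoped bound collapses to ln b.\<close>
lemma flh_regret:
  assumes "1 \<le> a" "a \<le> b" "b \<le> N"
  shows "\<zeta> * (\<Sum>t=a..b. (y t - flh_pred \<zeta> y xb t)\<^sup>2 - (y t - xb a t)\<^sup>2) \<le> ln (real b)"
proof -
  have "ln (flh_posterior \<zeta> y xb b a) \<le> 0"
    using flh_posterior_le_1[OF assms(1,2)] flh_posterior_pos[OF assms(1,2)] by simp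
  moreover have "ln (flh_w \<zeta> y xb a a) = - ln (real a)"
    using flh_w_diag[OF assms(1)] assms(1) by (simp add: ln_div)
  ultimately show ?thesis using flh_regret_telescope[OF assms] by simp
qed

end

section \<open>Variation and the KKT conditions\<close>

definition variation :: "(nat \<Rightarrow> real) \<Rightarrow> nat \<Rightarrow> nat \<Rightarrow> real" where
  "variation u a b = (\<Sum>t = a..<b. \<bar>u (Suc t) - u t\<bar>)"

lemma variation_nonneg: "0 \<le> variation u a b"
  unfolding variation_def by (simp add: sum_nonneg)

lemma variation_split: "a \<le> b \<Longrightarrow> b \<le> c \<Longrightarrow> variation u a c = variation u a b + variation u b c"
  unfolding variation_def by (simp add: sum.atLeastLessThan_concat)

lemma variation_mono: "a \<le> s \<Longrightarrow> s \<le> t \<Longrightarrow> t \<le> b \<Longrightarrow> variation u s t \<le> variation u a b"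
  using variation_split[of a s t u] variation_split[of a t b u]
    variation_nonneg[of u a s] variation_nonneg[of u t b] by linarith

lemma abs_diff_le_variation:
  assumes "s \<le> t"
  shows "\<bar>u t - u s\<bar> \<le> variation u s t"
proof -
  have "u t - u s = (\<Sum>i = s..<t. u (Suc i) - u i)"
    using assms by (simp add: sum_Suc_diff')
  then show ?thesis
    unfolding variation_def by (simp add: sum_abs)
qed

lemma abs_diff_le_variation_interval:
  assumes "s \<in> {a..b}" "t \<in> {a..b}"
  shows "\<bar>u t - u s\<bar> \<le> variation u a b"
proof (cases "s \<le> t")
  case True
  then show ?thesis
    using assms abs_diff_le_variation[of s t u] variation_mono[of a s t b u] by auto
next
  case False
  then show ?thesis
    using assms abs_diff_le_variation[of t s u] variation_mono[of a t s b u] by auto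
qed

lemma tv_eq_variation: "tv n u = variation u 1 n"
  unfolding tv_def variation_def
  by (rule sum.reindex_bij_witness[of _ Suc "\<lambda>t. t - 1"]) auto

lemma sum_diff_by_parts:
  fixes d s :: "nat \<Rightarrow> real"
  assumes "1 \<le> a" "a \<le> b"
  shows "(\<Sum>t=a..b. d t * (s t - s (t - 1)))
      = d b * s b - d a * s (a - 1) + (\<Sum>t=a..<b. s t * (d t - d (Suc t)))"
  using assms(2)
proof (induction b rule: nat_induct_at_least)
  case base
  then show ?case by (simp add: algebra_simps)
next
  case (Suc b)
  then show ?case by (simp add: algebra_simps)
qed

text \<open>Summation by parts turns the increments of the subgradient into the increments of u, which
  the sign condition makes add up to the variation.\<close>
lemma sum_subgradient_increments_le:
  fixes u s :: "nat \<Rightarrow> real"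
  assumes "1 \<le> a" "a \<le> b"
    and sign: "\<forall>t\<in>{a..<b}. u (Suc t) \<noteq> u t \<longrightarrow> s t = sgn (u (Suc t) - u t)"
    and s_bounds: "\<bar>s (a - 1)\<bar> \<le> 1" "\<bar>s b\<bar> \<le> 1"
    and close: "\<forall>t\<in>{a..b}. \<bar>w - u t\<bar> \<le> variation u a b"
  shows "(\<Sum>t=a..b. (w - u t) * (s t - s (t - 1))) \<le> 3 * variation u a b"
proof -
  let ?V = "variation u a b"
  have "(\<Sum>t=a..<b. s t * ((w - u t) - (w - u (Suc t)))) = ?V"
    unfolding variation_def
  proof (rule sum.cong[OF refl])
    fix t assume "t \<in> {a..<b}"
    then show "s t * ((w - u t) - (w - u (Suc t))) = \<bar>u (Suc t) - u t\<bar>"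
      using sign by (cases "u (Suc t) = u t") (auto simp: abs_sgn mult.commute)
  qed
  moreover have "(w - u b) * s b \<le> ?V" "- ((w - u a) * s (a - 1)) \<le> ?V"
  proof -
    have "\<bar>(w - u b) * s b\<bar> \<le> ?V * 1" "\<bar>(w - u a) * s (a - 1)\<bar> \<le> ?V * 1"
      unfolding abs_mult using close s_bounds assms(2) variation_nonneg[of u a b]
      by (intro mult_mono; simp)+
    then show "(w - u b) * s b \<le> ?V" "- ((w - u a) * s (a - 1)) \<le> ?V"
      by linarith+
  qed
  ultimately show ?thesis
    using sum_diff_by_parts[OF assms(1,2), of "\<lambda>t. w - u t" s] by linarith
qed

lemma exists_common_boundary_value:
  fixes u :: "nat \<Rightarrow> real"
  assumes "S \<noteq> {}" and close: "\<forall>s\<in>S. \<forall>t\<in>S. \<bar>u t - u s\<bar> < 2 * B"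
  obtains t0 where "t0 \<in> S" "\<forall>t\<in>S. u t = - B \<or> u t = B \<longrightarrow> u t = u t0"
proof (cases "\<exists>t0\<in>S. u t0 = - B \<or> u t0 = B")
  case True
  then obtain t0 where "t0 \<in> S" "u t0 = - B \<or> u t0 = B" by blast
  moreover have "u t = u t0" if "t \<in> S" "u t = - B \<or> u t = B" for t
    using close \<open>t0 \<in> S\<close> that calculation(2) by force
  ultimately show ?thesis using that by blast
next
  case False
  then show ?thesis using that \<open>S \<noteq> {}\<close> by blast
qed

lemma kkt_loss_difference:
  assumes K: "kkt n B C y u lam s gm gp" and "t \<in> {1..n}"
    and slack: "(w - u t) * (gm t - gp t) = 0"
  shows "(y t - w)\<^sup>2 - (y t - u t)\<^sup>2 = (w - u t)\<^sup>2 + 2 * lam * ((w - u t) * (s t - s (t - 1)))"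
proof -
  have "u t - y t = lam * (s t - s (t - 1)) + (gm t - gp t)"
    using K \<open>t \<in> {1..n}\<close> unfolding kkt_def by auto
  moreover have "(y t - w)\<^sup>2 - (y t - u t)\<^sup>2 = (w - u t)\<^sup>2 + 2 * ((w - u t) * (u t - y t))"
    by (simp add: power2_eq_square algebra_simps)
  ultimately show ?thesis
    using slack by (simp add: distrib_left)
qed

text \<open>A box multiplier can only be active where u touches the boundary of the box, and on an
  interval of variation at most 1 < 2B it touches at most one side of it.\<close>
lemma kkt_slack_compatible_value:
  assumes "1 \<le> B" and K: "kkt n B C y u lam s gm gp"
    and ab: "1 \<le> a" "a \<le> b" "b \<le> n" and "variation u a b \<le> 1"
  obtains t0 where "t0 \<in> {a..b}" "\<forall>t\<in>{a..b}. (u t0 - u t) * (gm t - gp t) = 0"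
proof -
  have "\<forall>s\<in>{a..b}. \<forall>t\<in>{a..b}. \<bar>u t - u s\<bar> < 2 * B"
    using abs_diff_le_variation_interval[of _ a b _ u] assms(1,6) by fastforce
  then obtain t0 where t0: "t0 \<in> {a..b}"
    and common: "\<forall>t\<in>{a..b}. u t = - B \<or> u t = B \<longrightarrow> u t = u t0"
    using ab by (elim exists_common_boundary_value[rotated]) auto
  have "\<forall>t\<in>{1..n}. gm t * (u t + B) = 0 \<and> gp t * (u t - B) = 0"
    using K unfolding kkt_def by auto
  then have "(gm t = 0 \<or> u t = u t0) \<and> (gp t = 0 \<or> u t = u t0)" if "t \<in> {a..b}" for t
    using common that ab by (force simp: add_eq_0_iff)
  then show ?thesis
    using that t0 by fastforce
qed

lemma kkt_interval_comparator:
  fixes B lam C :: real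
  assumes "1 \<le> B" and K: "kkt n B C y u lam s gm gp"
    and u_bounded: "\<forall>t\<in>{1..n}. - B \<le> u t \<and> u t \<le> B"
    and ab: "1 \<le> a" "a \<le> b" "b \<le> n"
    and short: "real (Suc (b - a)) * (variation u a b)\<^sup>2 \<le> 1"
  shows "\<exists>w. - B \<le> w \<and> w \<le> B \<and>
    (\<Sum>t=a..b. (y t - w)\<^sup>2 - (y t - u t)\<^sup>2) \<le> 1 + 6 * lam * variation u a b"
proof -
  let ?V = "variation u a b"
  have "?V\<^sup>2 \<le> real (Suc (b - a)) * ?V\<^sup>2"
    by (simp add: mult_le_cancel_right1)
  then have "?V\<^sup>2 \<le> 1"
    using short by linarith
  then obtain t0 where t0: "t0 \<in> {a..b}" and slack: "\<forall>t\<in>{a..b}. (u t0 - u t) * (gm t - gp t) = 0"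
    using kkt_slack_compatible_value[OF assms(1) K ab] by (metis abs_square_le_1 abs_le_D1)
  define w where "w = u t0"
  have close: "\<forall>t\<in>{a..b}. \<bar>w - u t\<bar> \<le> ?V"
    using abs_diff_le_variation_interval[OF _ t0, of _ u] by (auto simp: w_def)
  have "(\<Sum>t=a..b. (w - u t)\<^sup>2) \<le> (\<Sum>t=a..b. ?V\<^sup>2)"
    using close variation_nonneg[of u a b] by (intro sum_mono) (simp add: power2_le_iff_abs_le)
  also have "\<dots> = real (Suc (b - a)) * ?V\<^sup>2"
    using ab by simp
  finally have "(\<Sum>t=a..b. (w - u t)\<^sup>2) \<le> 1"
    using short by linarith
  moreover have "(\<Sum>t=a..b. (w - u t) * (s t - s (t - 1))) \<le> 3 * ?V"
    using ab close K unfolding kkt_def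
    by (intro sum_subgradient_increments_le) (auto simp: abs_le_iff)
  then have "2 * lam * (\<Sum>t=a..b. (w - u t) * (s t - s (t - 1))) \<le> 2 * lam * (3 * ?V)"
    using K unfolding kkt_def by (intro mult_left_mono) auto
  moreover have "(\<Sum>t=a..b. (y t - w)\<^sup>2 - (y t - u t)\<^sup>2)
      = (\<Sum>t=a..b. (w - u t)\<^sup>2) + 2 * lam * (\<Sum>t=a..b. (w - u t) * (s t - s (t - 1)))"
    using ab slack kkt_loss_difference[OF K]
    by (simp add: w_def sum.distrib sum_distrib_left)
  ultimately have "(\<Sum>t=a..b. (y t - w)\<^sup>2 - (y t - u t)\<^sup>2) \<le> 1 + 6 * lam * ?V"
    by linarith
  moreover have "- B \<le> w \<and> w \<le> B"
    using u_bounded t0 ab by (auto simp: w_def)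
  ultimately show ?thesis
    by auto
qed

section \<open>Assembling the bound\<close>

lemma one_le_ln: "3 \<le> n \<Longrightarrow> 1 \<le> ln (real n)"
  using exp_le by (subst ln_ge_iff) auto

lemma flh_ogd_regret_vs_base_pred:
  fixes B G :: real
  assumes "1 \<le> B" "B \<le> G"
    and y_bounded: "\<forall>t\<in>{1..n}. - G \<le> y t \<and> y t \<le> G"
    and init_bounded: "\<forall>j\<in>{1..n}. - B \<le> init j \<and> init j \<le> B"
    and ab: "1 \<le> a" "a \<le> b" "b \<le> n"
  shows "(\<Sum>t=a..b. (y t - flh_ogd B G init y t)\<^sup>2 - (y t - base_pred B init y a t)\<^sup>2)
      \<le> 2 * (G + B)\<^sup>2 * ln (real n)"
proof -
  define \<zeta> where "\<zeta> = 1 / (2 * (G + B)\<^sup>2)"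
  define xb where "xb = base_pred B init y"
  have GB: "G + B > 0"
    using assms(1,2) by simp
  interpret flh_bounded G B \<zeta> y xb n
  proof
    show "\<forall>t\<in>{1..n}. \<bar>y t\<bar> \<le> G"
      using y_bounded by (auto simp: abs_le_iff)
    show "\<forall>t\<in>{1..n}. \<forall>j\<in>{1..t}. - B \<le> xb j t \<and> xb j t \<le> B"
    proof (intro ballI)
      fix t j assume "t \<in> {1..n}" "j \<in> {1..t}"
      then show "- B \<le> xb j t \<and> xb j t \<le> B"
        using init_bounded assms(1) unfolding xb_def base_pred_def by (intro ogd_bounds) auto
    qed
  qed (use GB in \<open>auto simp: \<zeta>_def\<close>)
  have "flh_ogd B G init y t = flh_pred \<zeta> y xb t" for t
    by (simp add: flh_ogd_def flh_pred_def Let_def \<zeta>_def xb_def)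
  then have "\<zeta> * (\<Sum>t=a..b. (y t - flh_ogd B G init y t)\<^sup>2 - (y t - base_pred B init y a t)\<^sup>2)
      \<le> ln (real b)"
    using flh_regret[OF ab] by (simp add: xb_def)
  also have "\<dots> \<le> ln (real n)"
    using ab by simp
  finally show ?thesis
    using GB by (simp add: \<zeta>_def field_simps)
qed

lemma flh_ogd_interval_regret:
  fixes B G :: real
  assumes "1 \<le> B" "B \<le> G" "3 \<le> n"
    and y_bounded: "\<forall>t\<in>{1..n}. - G \<le> y t \<and> y t \<le> G"
    and init_bounded: "\<forall>j\<in>{1..n}. - B \<le> init j \<and> init j \<le> B"
    and u_bounded: "\<forall>t\<in>{1..n}. - B \<le> u t \<and> u t \<le> B"
    and K: "kkt n B C y u lam s gm gp"
    and ab: "1 \<le> a" "a \<le> b" "b \<le> n"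
    and short: "real (Suc (b - a)) * (variation u a b)\<^sup>2 \<le> 1"
  shows "(\<Sum>t=a..b. (y t - flh_ogd B G init y t)\<^sup>2 - (y t - u t)\<^sup>2)
      \<le> 4 * (G + B)\<^sup>2 * ln (real n) + 1 + 6 * lam * variation u a b"
proof -
  let ?x = "base_pred B init y a"
  obtain w where w: "- B \<le> w" "w \<le> B"
    and comparator: "(\<Sum>t=a..b. (y t - w)\<^sup>2 - (y t - u t)\<^sup>2) \<le> 1 + 6 * lam * variation u a b"
    using kkt_interval_comparator[OF assms(1) K u_bounded ab short] by blast
  have "(\<Sum>t=a..b. (y t - ?x t)\<^sup>2 - (y t - w)\<^sup>2) \<le> (G + B)\<^sup>2 * (1 + ln (real (Suc (b - a))))"
  proof (intro base_pred_regret ballI)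
    fix t assume "t \<in> {a..b}"
    then have "t \<in> {1..n}"
      using ab by auto
    then show "\<bar>y t\<bar> \<le> G"
      using y_bounded by (auto simp: abs_le_iff dest!: bspec)
  qed (use assms(1) w init_bounded ab in auto)
  also have "\<dots> \<le> (G + B)\<^sup>2 * (2 * ln (real n))"
  proof -
    have "ln (real (Suc (b - a))) \<le> ln (real n)"
      using ab by simp
    then show ?thesis
      using one_le_ln[OF assms(3)] by (intro mult_left_mono) auto
  qed
  finally have expert: "(\<Sum>t=a..b. (y t - ?x t)\<^sup>2 - (y t - w)\<^sup>2) \<le> 2 * (G + B)\<^sup>2 * ln (real n)"
    by simp
  have "(\<Sum>t=a..b. (y t - flh_ogd B G init y t)\<^sup>2 - (y t - u t)\<^sup>2)
      = (\<Sum>t=a..b. (y t - flh_ogd B G init y t)\<^sup>2 - (y t - ?x t)\<^sup>2)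
        + (\<Sum>t=a..b. (y t - ?x t)\<^sup>2 - (y t - w)\<^sup>2)
        + (\<Sum>t=a..b. (y t - w)\<^sup>2 - (y t - u t)\<^sup>2)"
    by (simp add: sum_subtractf)
  then show ?thesis
    using flh_ogd_regret_vs_base_pred[OF assms(1,2) y_bounded init_bounded ab] expert comparator
    by linarith
qed

lemma one_le_budget_of_large_variation:
  fixes v \<mu> :: real
  assumes "\<mu> > 0" "v \<ge> 0" "1 < real (Suc L) * v\<^sup>2" "1 \<le> L"
  shows "1 \<le> \<mu> * v + 2 * real L / \<mu>\<^sup>2"
proof (cases "\<mu> * v \<ge> 1")
  case True
  then show ?thesis by (simp add: add_increasing2)
next
  case False
  then have "v\<^sup>2 \<le> (1 / \<mu>)\<^sup>2"
    using assms(1,2) by (intro power_mono) (auto simp: field_simps)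
  then have "real (Suc L) * v\<^sup>2 \<le> real (Suc L) * (1 / \<mu>)\<^sup>2"
    by (intro mult_left_mono) auto
  then have "1 < real (Suc L) / \<mu>\<^sup>2"
    using assms(3) by (simp add: power_divide)
  also have "\<dots> \<le> 2 * real L / \<mu>\<^sup>2"
    using assms(1,4) by (intro divide_right_mono) auto
  finally show ?thesis
    using assms(1,2) by (simp add: add_increasing)
qed

text \<open>Cut [a, n] greedily into maximal intervals on which length times squared variation is
  at most 1.  Each interval except the last one violates this when extended by one step, so by
  the previous lemma it consumes at least one unit of the budget
  \<mu> * variation + 2 * length / \<mu>^2.\<close>
lemma sum_le_by_greedy_partition:
  fixes r u :: "nat \<Rightarrow> real" and Q c \<mu> :: real
  assumes "0 \<le> Q" "0 \<le> c" "0 < \<mu>"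
    and interval_bound: "\<And>a b. 1 \<le> a \<Longrightarrow> a \<le> b \<Longrightarrow> b \<le> n
      \<Longrightarrow> real (Suc (b - a)) * (variation u a b)\<^sup>2 \<le> 1 \<Longrightarrow> (\<Sum>t=a..b. r t) \<le> Q + c * variation u a b"
  shows "1 \<le> a \<Longrightarrow> a \<le> n \<Longrightarrow> (\<Sum>t=a..n. r t)
      \<le> Q * (1 + \<mu> * variation u a n + 2 * (real n - real a + 1) / \<mu>\<^sup>2) + c * variation u a n"
proof (induction "n - a" arbitrary: a rule: less_induct)
  case less
  let ?short = "\<lambda>b. real (Suc (b - a)) * (variation u a b)\<^sup>2 \<le> 1"
  show ?case
  proof (cases "?short n")
    case True
    then have "(\<Sum>t=a..n. r t) \<le> Q * 1 + c * variation u a n"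
      using interval_bound less.prems by simp
    also have "Q * 1 \<le> Q * (1 + \<mu> * variation u a n + 2 * (real n - real a + 1) / \<mu>\<^sup>2)"
      using assms(1,3) variation_nonneg[of u a n] less.prems by (intro mult_left_mono) auto
    finally show ?thesis by simp
  next
    case False
    moreover have "?short a"
      by (simp add: variation_def)
    ultimately obtain k where "k < n - a" "?short (a + k)" "\<not> ?short (a + Suc k)"
      using ex_least_nat_less[of "\<lambda>i. \<not> ?short (a + i)" "n - a"] less.prems by auto
    then obtain b where b: "a \<le> b" "b < n" "?short b" "\<not> ?short (Suc b)"
      by (intro that[of "a + k"]) auto
    have "(\<Sum>t=Suc b..n. r t) \<le> Q * (1 + \<mu> * variation u (Suc b) n
        + 2 * (real n - real (Suc b) + 1) / \<mu>\<^sup>2) + c * variation u (Suc b) n"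
      using less.hyps[of "Suc b"] less.prems b by auto
    moreover have "(\<Sum>t=a..b. r t) \<le> Q + c * variation u a b"
      using interval_bound less.prems b by auto
    moreover have "Q * 1 \<le> Q * (\<mu> * variation u a (Suc b) + 2 * real (Suc b - a) / \<mu>\<^sup>2)"
      using b less.prems assms(1,3) variation_nonneg[of u a "Suc b"]
      by (intro mult_left_mono one_le_budget_of_large_variation) auto
    moreover have "c * variation u a b + c * variation u (Suc b) n \<le> c * variation u a n"
      using b assms(2) variation_split[of a b "Suc b" u] variation_split[of a "Suc b" n u]
        variation_nonneg[of u b "Suc b"] by (simp add: algebra_simps mult_left_mono)
    moreover have "(\<Sum>t=a..n. r t) = (\<Sum>t=a..b. r t) + (\<Sum>t=Suc b..n. r t)"
      using b sum.ub_add_nat[of a b r "n - b"] by simp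
    moreover have "variation u a n = variation u a (Suc b) + variation u (Suc b) n"
      using b by (intro variation_split) auto
    moreover have "2 * (real n - real a + 1) / \<mu>\<^sup>2
        = 2 * real (Suc b - a) / \<mu>\<^sup>2 + 2 * (real n - real (Suc b) + 1) / \<mu>\<^sup>2"
      using b \<open>0 < \<mu>\<close> by (simp add: of_nat_diff field_simps)
    ultimately show ?thesis
      by (simp add: algebra_simps)
  qed
qed

lemma cube_root_tuned_budget:
  fixes N C V lam \<kappa> Q :: real
  assumes "0 < N" "0 < C" "V \<le> C" "0 \<le> lam" "0 \<le> Q" "0 \<le> \<kappa>"
    and lam: "lam \<le> \<kappa> * N powr (1/3) / C powr (1/3)"
  defines "\<mu> \<equiv> N powr (1/3) / C powr (1/3)"
  shows "Q * (1 + \<mu> * V + 2 * N / \<mu>\<^sup>2) + 6 * lam * V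
    \<le> (4 * Q + 6 * \<kappa>) * max (N powr (1/3) * C powr (2/3)) 1"
proof -
  define p q where "p = N powr (1/3)" and "q = C powr (1/3)"
  have p: "p > 0" "p ^ 3 = N" and q: "q > 0" "q ^ 3 = C" "C powr (2/3) = q\<^sup>2"
    using assms(1,2) by (auto simp: p_def q_def powr_realpow[symmetric] powr_powr)
  define m where "m = p * q\<^sup>2"
  have \<mu>: "\<mu> = p / q"
    by (simp add: \<mu>_def p_def q_def)
  have \<mu>C: "\<mu> * C = m"
    using q by (simp add: \<mu> m_def power2_eq_square power3_eq_cube flip: q(2))
  have \<mu>N: "2 * N / \<mu>\<^sup>2 = 2 * m"
    using p q by (simp add: \<mu> m_def power2_eq_square power3_eq_cube field_simps flip: p(2))
  have "\<mu> * V \<le> \<mu> * C"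
    using assms(3) p q by (intro mult_left_mono) (simp_all add: \<mu>)
  then have "Q * (1 + \<mu> * V + 2 * N / \<mu>\<^sup>2) \<le> Q * (4 * max m 1)"
    using assms(5) \<mu>C \<mu>N by (intro mult_left_mono) auto
  moreover have "lam * V \<le> \<kappa> * max m 1"
  proof -
    have lam': "lam \<le> \<kappa> * \<mu>"
      using lam by (simp add: \<mu>_def)
    have "lam * V \<le> lam * C"
      using assms(3,4) by (intro mult_left_mono)
    also have "\<dots> \<le> \<kappa> * m"
      using lam' assms(2) \<mu>C by (metis mult.assoc mult_right_mono less_imp_le)
    also have "\<dots> \<le> \<kappa> * max m 1"
      using assms(6) by (intro mult_left_mono) auto
    finally show ?thesis .
  qed
  ultimately show ?thesis
    by (simp add: m_def p_def q(3) algebra_simps flip: q_def)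
qed

lemma flh_ogd_dynamic_regret:
  fixes B G \<kappa> C :: real
  assumes "1 \<le> B" "B \<le> G" "0 \<le> \<kappa>" "3 \<le> n" "0 < C"
    and y: "\<forall>t \<in> {1..n}. - G \<le> y t \<and> y t \<le> G"
    and init: "\<forall>j \<in> {1..n}. - B \<le> init j \<and> init j \<le> B"
    and opt: "offline_opt n B C y u" and K: "kkt n B C y u lam s gm gp"
    and lam: "lam \<le> \<kappa> * real n powr (1/3) / C powr (1/3)"
  shows "(\<Sum>t = 1..n. (y t - flh_ogd B G init y t)\<^sup>2 - (y t - u t)\<^sup>2)
    \<le> (4 * (4 * (G + B)\<^sup>2 + 1) + 6 * \<kappa>) * ln (real n) * max (real n powr (1/3) * C powr (2/3)) 1"
proof -
  have u: "\<forall>t\<in>{1..n}. - B \<le> u t \<and> u t \<le> B" and "variation u 1 n \<le> C"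
    using opt by (auto simp: offline_opt_def feasible_def tv_eq_variation)
  have "0 \<le> lam"
    using K by (simp add: kkt_def)
  define L where "L = ln (real n)"
  define Q where "Q = 4 * (G + B)\<^sup>2 * L + 1"
  define \<mu> where "\<mu> = real n powr (1/3) / C powr (1/3)"
  have "L \<ge> 1"
    using one_le_ln[OF assms(4)] by (simp add: L_def)
  have interval: "(\<Sum>t=a..b. (y t - flh_ogd B G init y t)\<^sup>2 - (y t - u t)\<^sup>2) \<le> Q + 6 * lam * variation u a b"
    if "1 \<le> a" "a \<le> b" "b \<le> n" "real (Suc (b - a)) * (variation u a b)\<^sup>2 \<le> 1" for a b
    using flh_ogd_interval_regret[OF assms(1,2,4) y init u K that] by (simp add: Q_def L_def)
  have "(\<Sum>t = 1..n. (y t - flh_ogd B G init y t)\<^sup>2 - (y t - u t)\<^sup>2)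
      \<le> Q * (1 + \<mu> * variation u 1 n + 2 * real n / \<mu>\<^sup>2) + 6 * lam * variation u 1 n"
    using sum_le_by_greedy_partition[where c = "6 * lam" and \<mu> = \<mu> and a = 1, OF _ _ _ interval]
      \<open>0 \<le> lam\<close> \<open>L \<ge> 1\<close> \<open>0 < C\<close> assms(4) by (simp add: Q_def \<mu>_def)
  also have "\<dots> \<le> (4 * Q + 6 * \<kappa>) * max (real n powr (1/3) * C powr (2/3)) 1"
    using \<open>0 \<le> lam\<close> \<open>L \<ge> 1\<close> \<open>0 < C\<close> assms(3,4) lam \<open>variation u 1 n \<le> C\<close>
    unfolding \<mu>_def by (intro cube_root_tuned_budget) (auto simp: Q_def)
  also have "\<dots> \<le> (4 * (4 * (G + B)\<^sup>2 + 1) + 6 * \<kappa>) * L * max (real n powr (1/3) * C powr (2/3)) 1"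
    using \<open>L \<ge> 1\<close> mult_left_mono[OF \<open>L \<ge> 1\<close> assms(3)]
    by (intro mult_right_mono) (auto simp: Q_def algebra_simps)
  finally show ?thesis
    by (simp add: L_def)
qed

theorem lemma3:
  fixes B G \<kappa> :: real
  assumes "B \<ge> 1" and "G \<ge> B" and "\<kappa> > 0"
  shows "\<exists>c > 0. \<forall>(n::nat) (C::real) (y::nat \<Rightarrow> real) (init::nat \<Rightarrow> real) u lam s gm gp.
    n \<ge> 3 \<longrightarrow> C > 0 \<longrightarrow>
    (\<forall>t \<in> {1..n}. - G \<le> y t \<and> y t \<le> G) \<longrightarrow>
    (\<forall>j \<in> {1..n}. - B \<le> init j \<and> init j \<le> B) \<longrightarrow>
    offline_opt n B C y u \<longrightarrow>
    kkt n B C y u lam s gm gp \<longrightarrow>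
    lam \<le> \<kappa> * real n powr (1/3) / C powr (1/3) \<longrightarrow>
    (\<Sum>t = 1..n. (y t - flh_ogd B G init y t)\<^sup>2 - (y t - u t)\<^sup>2)
      \<le> c * ln (real n) * max (real n powr (1/3) * C powr (2/3)) 1"
proof (intro exI[of _ "4 * (4 * (G + B)\<^sup>2 + 1) + 6 * \<kappa>"] conjI allI impI)
  show "0 < 4 * (4 * (G + B)\<^sup>2 + 1) + 6 * \<kappa>"
    using assms(3) by (intro add_pos_pos) (auto intro: add_nonneg_pos)
qed (rule flh_ogd_dynamic_regret[OF assms(1,2) less_imp_le[OF assms(3)]])

end
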